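(* Let $\lambda=\mathrm{diag}(\lambda_x,\lambda_y)$ with $\lambda_x,\lambda_y\in[0,1)$. Fix an index $k$ and given values $h(k)$, $v(k)$, $\omega_k\neq0$, with $\rho_k=(\rho_{xk},\rho_{yk})^T$, $D\rho_k=(D\rho_{xk},D\rho_{yk})^T$, $\eta_k=(\eta_{xk},\eta_{yk})^T:=\Phi(\theta_{k+1})-\Phi(\theta_k)$ and $\Psi=(\Psi_x,\Psi_y)^T$. Suppose $\delta_k>0$ is a root of $$\tfrac12 g\delta^2-\Big\{[D\rho_{xk}+\Psi_x(\theta_k,\omega_k)]\cot\theta_k+[D\rho_{yk}+\Psi_y(\theta_k,\omega_k)]\Big\}\delta+\Big[\eta_{xk}\cot\theta_k+\eta_{yk}+(\lambda_x-1)\rho_{xk}\cot\theta_k+(\lambda_y-1)\rho_{yk}\Big]=0,$$ define $$I_k=-\frac{m\{(\lambda_x-1)\rho_{xk}+\eta_{xk}-[D\rho_{xk}+\Psi_x(\theta_k,\omega_k)]\delta_k\}}{\delta_k\sin\theta_k},$$ assume $I_k\neq0$, and define $r_k=\dfrac{(-1)^{k+1}J\Delta\theta^*}{I_k\delta_k}-\dfrac{J\omega_k}{I_k}$. Then applying $(I_k,r_k)$ and propagating with flight time $\delta_k$ via the hybrid devil-stick dynamics yields $\theta_{k+1}=\theta_k+(-1)^{k+1}\Delta\theta^*$ (so $\delta_k$ is consistent with $\delta_k=(-1)^{k+1}\Delta\theta^*/\omega_{k+1}$, $\omega_{k+1}=\omega_k+I_kr_k/J$) and $\rho_{k+1}=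\lambda\rho_k$.
   Context: Fix constants $m,J,g>0$, $\alpha,\beta>0$, and angles $\theta^{\mathrm{odd}}\in(0,\pi/2)$, $\theta^{\mathrm{even}}\in(\pi/2,\pi)$; set $\Delta\theta^*=\theta^{\mathrm{even}}-\theta^{\mathrm{odd}}>0$. For $k=1,2,\dots$ put $\theta_k=\theta^{\mathrm{odd}}$ if $k$ is odd and $\theta_k=\theta^{\mathrm{even}}$ if $k$ is even, so $\theta_{k+1}=\theta_k+(-1)^{k+1}\Delta\theta^*$ and $\theta_{k+2}=\theta_k$. The hybrid devil-stick dynamics consist of states $h(k)\in\mathbb{R}^2$, $v(k)\in\mathbb{R}^2$, $\omega_k\in\mathbb{R}\setminus\{0\}$, inputs $I_k,r_k\in\mathbb{R}$ and times of flight $\delta_k>0$ satisfying, for all $k\ge1$, $$h(k+1)=h(k)+v(k)\delta_k+\begin{bmatrix}-\sin\theta_k\\ \cos\theta_k\end{bmatrix}\frac{I_k\delta_k}{m}+\begin{bmatrix}0\\-\tfrac12 g\delta_k^2\end{bmatrix},\qquad v(k+1)=v(k)+\begin{bmatrix}-\sin\theta_k\\ \cos\theta_k\end{bmatrix}\frac{I_k}{m}+\begin{bmatrix}0\\-g\delta_k\end{bmatrix},$$ $$\omega_{k+1}=\omega_k+\frac{I_kr_k}{J},\qquad \theta_{k+1}=\theta_k+\omega_{k+1}\delta_k,$$ so that $\delta_k=(-1)^{k+1}\Delta\theta^*/\omega_{k+1}$. Define $\Phi(\theta)=(\alpha\tan\theta,\ \beta)^T$ and $$\Psi(\theta_k,\omega_k)=\begin{bmatrix}\dfrac{(-1)^k\omega_k\alpha}{\Delta\theta^*}(\tan\theta_k-\tan\theta_{k+1})\\[2mm]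 -\dfrac{(-1)^k g\Delta\theta^*}{2\omega_k}\end{bmatrix},$$ and $\rho_k=h(k)-\Phi(\theta_k)$, $D\rho_k=v(k)-\Psi(\theta_k,\omega_k)$. *)

theory Defs
  imports Complex_Main
begin

definition dth :: "real \<Rightarrow> real \<Rightarrow> real" where
  "dth th_odd th_even = th_even - th_odd"

definition theta_seq :: "real \<Rightarrow> real \<Rightarrow> nat \<Rightarrow> real" where
  "theta_seq th_odd th_even k = (if odd k then th_odd else th_even)"

definition Phi_x :: "real \<Rightarrow> real \<Rightarrow> real" where
  "Phi_x alpha th = alpha * tan th"

definition Phi_y :: "real \<Rightarrow> real \<Rightarrow> real" where
  "Phi_y beta th = beta"

text \<open>Psi(theta_k, omega_k), components; the index k determines theta_k and theta_(k+1).\<close>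
definition Psi_x :: "real \<Rightarrow> real \<Rightarrow> real \<Rightarrow> nat \<Rightarrow> real \<Rightarrow> real" where
  "Psi_x alpha th_odd th_even k w =
     (-1) ^ k * w * alpha / dth th_odd th_even *
       (tan (theta_seq th_odd th_even k) - tan (theta_seq th_odd th_even (k + 1)))"

definition Psi_y :: "real \<Rightarrow> real \<Rightarrow> real \<Rightarrow> nat \<Rightarrow> real \<Rightarrow> real" where
  "Psi_y g th_odd th_even k w = - ((-1) ^ k * g * dth th_odd th_even / (2 * w))"

end

theory Submission
  imports Defs
begin

text \<open>The flight time \<delta> is prescribed; the spin input r is then chosen so that the stick
  rotates by exactly \<open>\<plusminus>\<Delta>\<theta>*\<close> during the flight, and the impulse I is chosen so that the
  horizontal error contracts by \<open>\<lambda>\<^sub>x\<close>. Because the impulse acts along \<open>(-sin \<theta>, cos \<theta>)\<close>,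
  its vertical effect is \<open>-cot \<theta>\<close> times its horizontal one, and the quadratic equation for \<delta>
  is precisely the condition that the vertical error then contracts by \<open>\<lambda>\<^sub>y\<close>.\<close>

lemma theta_seq_step:
  "theta_seq th_odd th_even k + (-1) ^ (k + 1) * dth th_odd th_even
     = theta_seq th_odd th_even (k + 1)"
  by (cases "odd k") (auto simp: theta_seq_def dth_def)

lemma sin_theta_seq_nonzero:
  assumes "0 < th_odd" "th_odd < pi" "0 < th_even" "th_even < pi"
  shows "sin (theta_seq th_odd th_even k) \<noteq> 0"
  using assms sin_gt_zero[of th_odd] sin_gt_zero[of th_even] by (simp add: theta_seq_def)

lemma spin_input_rotation:
  fixes w I r J \<delta> s D :: real
  assumes "r = s * J * D / (I * \<delta>) - J * w / I" "I \<noteq> 0" "J \<noteq> 0" "\<delta> \<noteq> 0"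
  shows "(w + I * r / J) * \<delta> = s * D"
  using assms by (simp add: field_simps)

lemma impulse_horizontal_displacement:
  fixes m I \<delta> th lam h p p' v :: real
  assumes "I = - (m * ((lam - 1) * (h - p) + (p' - p) - v * \<delta>)) / (\<delta> * sin th)"
    and "m \<noteq> 0" "\<delta> \<noteq> 0" "sin th \<noteq> 0"
  shows "sin th * I * \<delta> / m = v * \<delta> + (1 - lam) * (h - p) - (p' - p)"
  using assms by (simp add: field_simps)

lemma horizontal_error_contracts:
  fixes m I \<delta> th lam h p p' v :: real
  assumes "sin th * I * \<delta> / m = v * \<delta> + (1 - lam) * (h - p) - (p' - p)"
  shows "h + v * \<delta> + (- sin th) * I * \<delta> / m - p' = lam * (h - p)"
  using assms by (simp add: algebra_simps)

lemma vertical_error_contracts: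
  fixes m I \<delta> th g lam_x lam_y hx hy px px' q vx vy :: real
  assumes impulse: "sin th * I * \<delta> / m = vx * \<delta> + (1 - lam_x) * (hx - px) - (px' - px)"
    and root: "1/2 * g * \<delta>^2 - (vx * cot th + vy) * \<delta>
        + ((px' - px) * cot th + (lam_x - 1) * (hx - px) * cot th + (lam_y - 1) * (hy - q)) = 0"
    and "sin th \<noteq> 0"
  shows "hy + vy * \<delta> + cos th * I * \<delta> / m - 1/2 * g * \<delta>^2 - q = lam_y * (hy - q)"
proof -
  have "cos th * I * \<delta> / m = cot th * (sin th * I * \<delta> / m)"
    using \<open>sin th \<noteq> 0\<close> by (simp add: cot_def field_simps)
  also have "\<dots> = cot th * (vx * \<delta> + (1 - lam_x) * (hx - px) - (px' - px))"
    by (simp only: impulse)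
  finally show ?thesis
    using root by (simp add: algebra_simps)
qed

theorem mainTheorem7:
  fixes m J g alpha beta th_odd th_even lam_x lam_y :: real
    and k :: nat
    and hx hy vx vy w \<delta> I r hx' hy' vx' vy' w' :: real
  assumes m_pos: "m > 0" and J_pos: "J > 0" and g_pos: "g > 0"
    and alpha_pos: "alpha > 0" and beta_pos: "beta > 0"
    and th_odd: "0 < th_odd" "th_odd < pi / 2"
    and th_even: "pi / 2 < th_even" "th_even < pi"
    and k_ge: "k \<ge> 1"
    and lam_x: "0 \<le> lam_x" "lam_x < 1"
    and lam_y: "0 \<le> lam_y" "lam_y < 1"
    and w_nz: "w \<noteq> 0"
    and delta_pos: "\<delta> > 0"
    and root: "let th = theta_seq th_odd th_even k;
                   th' = theta_seq th_odd th_even (k + 1);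
                   rho_x = hx - Phi_x alpha th; rho_y = hy - Phi_y beta th;
                   Drho_x = vx - Psi_x alpha th_odd th_even k w;
                   Drho_y = vy - Psi_y g th_odd th_even k w;
                   eta_x = Phi_x alpha th' - Phi_x alpha th;
                   eta_y = Phi_y beta th' - Phi_y beta th
               in 1/2 * g * \<delta>^2
                  - ((Drho_x + Psi_x alpha th_odd th_even k w) * cot th
                     + (Drho_y + Psi_y g th_odd th_even k w)) * \<delta>
                  + (eta_x * cot th + eta_y + (lam_x - 1) * rho_x * cot th
                     + (lam_y - 1) * rho_y) = 0"
    and I_def: "let th = theta_seq th_odd th_even k;
                   th' = theta_seq th_odd th_even (k + 1);
                   rho_x = hx - Phi_x alpha th;
                   Drho_x = vx - Psi_x alpha th_odd th_even k w;
                   eta_x = Phi_x alpha th' - Phi_x alpha th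
               in I = - (m * ((lam_x - 1) * rho_x + eta_x
                         - (Drho_x + Psi_x alpha th_odd th_even k w) * \<delta>))
                      / (\<delta> * sin th)"
    and I_nz: "I \<noteq> 0"
    and r_def: "r = (-1) ^ (k + 1) * J * dth th_odd th_even / (I * \<delta>) - J * w / I"
    and w_next: "w' = w + I * r / J"
    and hx_next: "hx' = hx + vx * \<delta> + (- sin (theta_seq th_odd th_even k)) * I * \<delta> / m"
    and hy_next: "hy' = hy + vy * \<delta> + cos (theta_seq th_odd th_even k) * I * \<delta> / m
                        - 1/2 * g * \<delta>^2"
    and vx_next: "vx' = vx + (- sin (theta_seq th_odd th_even k)) * I / m"
    and vy_next: "vy' = vy + cos (theta_seq th_odd th_even k) * I / m - g * \<delta>"
  shows "theta_seq th_odd th_even k + w' * \<delta>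
           = theta_seq th_odd th_even k + (-1) ^ (k + 1) * dth th_odd th_even
       \<and> theta_seq th_odd th_even k + (-1) ^ (k + 1) * dth th_odd th_even
           = theta_seq th_odd th_even (k + 1)
       \<and> w' \<noteq> 0
       \<and> \<delta> = (-1) ^ (k + 1) * dth th_odd th_even / w'
       \<and> hx' - Phi_x alpha (theta_seq th_odd th_even (k + 1))
           = lam_x * (hx - Phi_x alpha (theta_seq th_odd th_even k))
       \<and> hy' - Phi_y beta (theta_seq th_odd th_even (k + 1))
           = lam_y * (hy - Phi_y beta (theta_seq th_odd th_even k))"
proof -
  define th where "th = theta_seq th_odd th_even k"
  define th' where "th' = theta_seq th_odd th_even (k + 1)"
  have D_pos: "dth th_odd th_even > 0"
    using th_odd th_even by (simp add: dth_def)
  have sin_th: "sin th \<noteq> 0"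
    unfolding th_def using th_odd th_even by (intro sin_theta_seq_nonzero) auto
  have rotation: "w' * \<delta> = (-1) ^ (k + 1) * dth th_odd th_even"
    unfolding w_next using spin_input_rotation[OF r_def I_nz] J_pos delta_pos by simp
  then have w'_nz: "w' \<noteq> 0"
    using D_pos by auto
  \<comment> \<open>In the hypotheses \<open>D\<rho>\<^sub>x + \<Psi>\<^sub>x\<close> collapses to the velocity \<open>v\<^sub>x\<close>.\<close>
  have impulse: "sin th * I * \<delta> / m
      = vx * \<delta> + (1 - lam_x) * (hx - Phi_x alpha th) - (Phi_x alpha th' - Phi_x alpha th)"
    using I_def m_pos delta_pos sin_th unfolding th_def th'_def Let_def
    by (intro impulse_horizontal_displacement) auto
  have "hx' - Phi_x alpha th' = lam_x * (hx - Phi_x alpha th)"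
    unfolding hx_next th_def[symmetric] by (rule horizontal_error_contracts[OF impulse])
  moreover have "hy' - Phi_y beta th' = lam_y * (hy - Phi_y beta th)"
    unfolding hy_next th_def[symmetric] Phi_y_def
    using root sin_th by (intro vertical_error_contracts[OF impulse])
      (simp_all add: Let_def Phi_y_def th_def th'_def)
  ultimately show ?thesis
    using rotation w'_nz theta_seq_step[of th_odd th_even k]
    unfolding th_def th'_def by (auto simp: field_simps)
qed

end
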